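(* Consider a charged particle (mass $m>0$, charge $q$) moving in an external electromagnetic field with potential $(A^0,\mathbf A)$, described with the light-like parameter $\xi=ct-z$ by the Hamiltonian $\hat H(\hat{\mathbf x},\hat{\boldsymbol\Pi};\xi)$ defined in the context. (i) In a spacetime region where $A^\mu$ is independent of $t$, $\hat H$ is constant along the solutions of the Hamilton equations. (ii) More generally, if $A^0$ and $A^z$ are independent of $t$, then along any solution the dimensionless energy gain over $[\xi_0,\xi_1]$ is $$\mathcal E:=\frac{\hat H(\xi_1)-\hat H(\xi_0)}{mc^2}=\int_{\xi_0}^{\xi_1}\frac{d\xi}{2\hat s(\xi)}\,\frac{\partial\hat v}{\partial\xi}\big[\hat{\mathbf x}(\xi),\hat{\boldsymbol\Pi}(\xi);\xi\big],\qquad \hat v:=|\hat{\mathbf u}^{\perp}|^2 .$$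
   Context: Coordinates $\mathbf x=(x,y,z)$; superscript $\perp$ denotes $(x,y)$-components. For a field $f(t,\mathbf x)$, $\hat f(\xi,\hat{\mathbf x}):=f((\xi+\hat z)/c,\hat{\mathbf x})$; along a motion, $\hat g(\xi)$ denotes the value of a dynamical variable $g$ when $ct-z=\xi$; prime denotes $d/d\xi$. The Hamiltonian is $$\hat H(\hat{\mathbf x},\hat{\boldsymbol\Pi};\xi)=mc^2\,\frac{1+\hat s^2+|\hat{\mathbf u}^{\perp}|^2}{2\hat s}+q\hat A^0(\xi,\hat{\mathbf x}),\quad \hat{\mathbf u}^{\perp}=\frac{\hat{\boldsymbol\Pi}^{\perp}-q\hat{\mathbf A}^{\perp}(\xi,\hat{\mathbf x})}{mc^2},\quad \hat s=-\frac{\hat\Pi^z+q[\hat A^0-\hat A^z](\xi,\hat{\mathbf x})}{mc^2}>0,$$ with Hamilton equations $\hat{\mathbf x}'=\partial\hat H/\partial\hat{\boldsymbol\Pi}$, $\hat{\boldsymbol\Pi}'=-\partial\hat H/\partial\hat{\mathbf x}$ (equivalent to the relativistic Lorentz-force equations of motion; $\hat H$ equals the particle energy $mc^2\gamma+qA^0$). $\partial\hat v/\partial\xi$ denotes the partial derivative of $\hat v$, viewed as a function of $(\hat{\mathbf x},\hat{\boldsymbol\Pi},\xi)$, with respect to its explicit $\xi$-dependence. *)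

theory Defs
  imports "HOL-Analysis.Analysis"
begin

text \<open>Positions and canonical momenta are vectors in real^3; component 1 is x,
  component 2 is y, component 3 is z.  A scalar field is a function of (t, x).\<close>

type_synonym field = "real \<Rightarrow> real^3 \<Rightarrow> real"

definition hatf :: "real \<Rightarrow> field \<Rightarrow> real \<Rightarrow> real^3 \<Rightarrow> real" where
  "hatf c f \<xi> x = f ((\<xi> + x $ 3) / c) x"

definition s_hat :: "real \<Rightarrow> real \<Rightarrow> real \<Rightarrow> field \<Rightarrow> field
    \<Rightarrow> real^3 \<Rightarrow> real^3 \<Rightarrow> real \<Rightarrow> real" where
  "s_hat m c q A0 Az x P \<xi> =
     - (P $ 3 + q * (hatf c A0 \<xi> x - hatf c Az \<xi> x)) / (m * c\<^sup>2)"

definition ux_hat :: "real \<Rightarrow> real \<Rightarrow> real \<Rightarrow> field \<Rightarrow> real^3 \<Rightarrow> real^3 \<Rightarrow> real \<Rightarrow> real" where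
  "ux_hat m c q Ax x P \<xi> = (P $ 1 - q * hatf c Ax \<xi> x) / (m * c\<^sup>2)"

definition uy_hat :: "real \<Rightarrow> real \<Rightarrow> real \<Rightarrow> field \<Rightarrow> real^3 \<Rightarrow> real^3 \<Rightarrow> real \<Rightarrow> real" where
  "uy_hat m c q Ay x P \<xi> = (P $ 2 - q * hatf c Ay \<xi> x) / (m * c\<^sup>2)"

definition v_hat :: "real \<Rightarrow> real \<Rightarrow> real \<Rightarrow> field \<Rightarrow> field
    \<Rightarrow> real^3 \<Rightarrow> real^3 \<Rightarrow> real \<Rightarrow> real" where
  "v_hat m c q Ax Ay x P \<xi> = (ux_hat m c q Ax x P \<xi>)\<^sup>2 + (uy_hat m c q Ay x P \<xi>)\<^sup>2"

definition H_hat :: "real \<Rightarrow> real \<Rightarrow> real \<Rightarrow> field \<Rightarrow> field \<Rightarrow> field \<Rightarrow> field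
    \<Rightarrow> real^3 \<Rightarrow> real^3 \<Rightarrow> real \<Rightarrow> real" where
  "H_hat m c q A0 Ax Ay Az x P \<xi> =
     m * c\<^sup>2 * (1 + (s_hat m c q A0 Az x P \<xi>)\<^sup>2 + v_hat m c q Ax Ay x P \<xi>)
       / (2 * s_hat m c q A0 Az x P \<xi>)
     + q * hatf c A0 \<xi> x"

definition hamilton_solution ::
  "(real^3 \<Rightarrow> real^3 \<Rightarrow> real \<Rightarrow> real) \<Rightarrow> real set
     \<Rightarrow> (real \<Rightarrow> real^3) \<Rightarrow> (real \<Rightarrow> real^3) \<Rightarrow> bool" where
  "hamilton_solution H I X P \<longleftrightarrow>
     (\<forall>\<xi>\<in>I. \<exists>gP gX.
        GDERIV (\<lambda>p. H (X \<xi>) p \<xi>) (P \<xi>) :> gP \<and>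
        GDERIV (\<lambda>y. H y (P \<xi>) \<xi>) (X \<xi>) :> gX \<and>
        (X has_vector_derivative gP) (at \<xi> within I) \<and>
        (P has_vector_derivative (- gX)) (at \<xi> within I))"

definition time_indep_on :: "(real \<times> (real^3)) set \<Rightarrow> field \<Rightarrow> bool" where
  "time_indep_on U f \<longleftrightarrow>
     (\<forall>t x. (t, x) \<in> U \<longrightarrow> ((\<lambda>\<tau>. f \<tau> x) has_real_derivative 0) (at t))"

end

theory Submission imports Defs begin

text \<open>Along a solution of Hamilton's equations the total \<open>\<xi>\<close>-derivative of \<open>H\<close> equals its
  explicit partial derivative \<open>\<partial>H/\<partial>\<xi>\<close>: the contributions of \<open>x' = \<partial>H/\<partial>\<Pi>\<close> and
  \<open>\<Pi>' = -\<partial>H/\<partial>x\<close> cancel.  A hatted field depends on \<open>\<xi>\<close> only through \<open>t = (\<xi> + z)/c\<close>, so if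
  \<open>A\<^sup>0\<close> and \<open>A\<^sup>z\<close> are time independent then \<open>s\<close> and \<open>q A\<^sup>0\<close> have no explicit \<open>\<xi>\<close>-dependence and
  \<open>\<partial>H/\<partial>\<xi> = m c\<^sup>2 (\<partial>v/\<partial>\<xi>) / (2 s)\<close>; the fundamental theorem of calculus gives (ii).  If moreover
  \<open>A\<^sup>\<perp>\<close> is time independent, \<open>\<partial>v/\<partial>\<xi> = 0\<close> and \<open>H\<close> is constant on the interval, which is (i).\<close>

lemma has_derivative_compose_unique:
  assumes "(G has_derivative G') (at (e y))"
    and "(e has_derivative e') (at y)"
    and "((\<lambda>y. G (e y)) has_derivative L) (at y)"
  shows "G' (e' h) = L h"
proof -
  have "((\<lambda>y. G (e y)) has_derivative (\<lambda>h. G' (e' h))) (at y)"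
    using has_derivative_compose[OF assms(2,1)] by (simp add: o_def)
  with assms(3) show ?thesis
    using has_derivative_unique by metis
qed

lemma hamiltonian_total_derivative:
  fixes H :: "'a::real_inner \<Rightarrow> 'a \<Rightarrow> real \<Rightarrow> real"
  assumes dH: "(\<lambda>z. H (fst z) (fst (snd z)) (snd (snd z))) differentiable (at (X \<xi>, P \<xi>, \<xi>))"
    and gP: "GDERIV (\<lambda>p. H (X \<xi>) p \<xi>) (P \<xi>) :> gP"
    and gX: "GDERIV (\<lambda>x. H x (P \<xi>) \<xi>) (X \<xi>) :> gX"
    and dX: "(X has_vector_derivative gP) (at \<xi> within I)"
    and dP: "(P has_vector_derivative (- gX)) (at \<xi> within I)"
    and partial: "((\<lambda>\<eta>. H (X \<xi>) (P \<xi>) \<eta>) has_real_derivative D) (at \<xi>)"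
  shows "((\<lambda>\<xi>. H (X \<xi>) (P \<xi>) \<xi>) has_real_derivative D) (at \<xi> within I)"
proof -
  define G where "G = (\<lambda>z. H (fst z) (fst (snd z)) (snd (snd z)))"
  from dH obtain G' where G': "(G has_derivative G') (at (X \<xi>, P \<xi>, \<xi>))"
    unfolding G_def differentiable_def by blast
  have G'_x: "G' (h, 0, 0) = h \<bullet> gX" for h
    by (rule has_derivative_compose_unique[where e = "\<lambda>x. (x, P \<xi>, \<xi>)", OF G'])
      (use gX in \<open>auto intro!: derivative_eq_intros simp: G_def gderiv_def zero_prod_def\<close>)
  have G'_p: "G' (0, h, 0) = h \<bullet> gP" for h
    by (rule has_derivative_compose_unique[where e = "\<lambda>p. (X \<xi>, p, \<xi>)", OF G'])
      (use gP in \<open>auto intro!: derivative_eq_intros simp: G_def gderiv_def zero_prod_def\<close>)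
  have G'_\<xi>: "G' (0, 0, h) = h * D" for h
    by (rule has_derivative_compose_unique[where e = "\<lambda>\<eta>. (X \<xi>, P \<xi>, \<eta>)", OF G'])
      (use partial in \<open>auto intro!: derivative_eq_intros
         simp: G_def has_field_derivative_def zero_prod_def mult.commute[of _ D]\<close>)
  have "((\<lambda>\<xi>. (X \<xi>, P \<xi>, \<xi>)) has_derivative (\<lambda>h. (h *\<^sub>R gP, h *\<^sub>R (- gX), h))) (at \<xi> within I)"
    using dX dP unfolding has_vector_derivative_def
    by (auto intro!: derivative_eq_intros simp: zero_prod_def)
  then have "((\<lambda>\<xi>. G (X \<xi>, P \<xi>, \<xi>)) has_derivative
               (\<lambda>h. G' (h *\<^sub>R gP, h *\<^sub>R (- gX), h))) (at \<xi> within I)"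
    using has_derivative_compose G' by fastforce
  moreover have "G' (h *\<^sub>R gP, h *\<^sub>R (- gX), h) = h * D" for h
  proof -
    have "(h *\<^sub>R gP, h *\<^sub>R (- gX), h) = (h *\<^sub>R gP, 0, 0) + ((0, h *\<^sub>R (- gX), 0) + (0, 0, h))"
      by simp
    then have "G' (h *\<^sub>R gP, h *\<^sub>R (- gX), h)
               = G' (h *\<^sub>R gP, 0, 0) + (G' (0, h *\<^sub>R (- gX), 0) + G' (0, 0, h))"
      using linear_add[OF has_derivative_linear[OF G']] by metis
    also have "\<dots> = h * D"
      using G'_x G'_p G'_\<xi> by (simp add: inner_commute)
    finally show ?thesis .
  qed
  ultimately show ?thesis
    unfolding G_def has_field_derivative_def by (simp add: mult.commute[of _ D])
qed

lemma hatf_differentiable: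
  assumes f: "\<And>p. (\<lambda>p. f (fst p) (snd p)) differentiable (at p)"
    and e: "e differentiable (at z within S)" and g: "g differentiable (at z within S)"
  shows "(\<lambda>z. hatf c f (e z) (g z)) differentiable (at z within S)"
proof -
  have "(\<lambda>z. g z $ 3) differentiable (at z within S)"
    using differentiable_compose[OF bounded_linear_imp_differentiable[OF bounded_linear_vec_nth] g]
    by (simp add: o_def)
  then have "(\<lambda>z. ((e z + g z $ 3) / c, g z)) differentiable (at z within S)"
    using e g by (auto intro!: derivative_intros simp: divide_inverse)
  from differentiable_compose[OF f this] show ?thesis
    unfolding hatf_def by (simp add: o_def)
qed

lemma hatf_time_independent:
  assumes "((\<lambda>t. f t x) has_real_derivative 0) (at ((\<xi> + x $ 3) / c))" and "c \<noteq> 0"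
  shows "((\<lambda>\<eta>. hatf c f \<eta> x) has_real_derivative 0) (at \<xi>)"
proof -
  have "((\<lambda>\<eta>. (\<eta> + x $ 3) / c) has_real_derivative 1 / c) (at \<xi>)"
    using assms(2) by (auto intro!: derivative_eq_intros)
  from DERIV_chain2[OF assms(1) this] show ?thesis
    unfolding hatf_def by simp
qed

lemma H_hat_differentiable:
  assumes "\<And>p. (\<lambda>p. A0 (fst p) (snd p)) differentiable (at p)"
    "\<And>p. (\<lambda>p. Ax (fst p) (snd p)) differentiable (at p)"
    "\<And>p. (\<lambda>p. Ay (fst p) (snd p)) differentiable (at p)"
    "\<And>p. (\<lambda>p. Az (fst p) (snd p)) differentiable (at p)"
    and "s_hat m c q A0 Az x p \<xi> \<noteq> 0" and "m \<noteq> 0" and "c \<noteq> 0"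
  shows "(\<lambda>z. H_hat m c q A0 Ax Ay Az (fst z) (fst (snd z)) (snd (snd z)))
           differentiable (at (x, p, \<xi>))"
proof -
  have x: "(\<lambda>z::(real^3) \<times> (real^3) \<times> real. fst z) differentiable (at w)" for w
    by (intro bounded_linear_imp_differentiable bounded_linear_fst)
  have p: "(\<lambda>z::(real^3) \<times> (real^3) \<times> real. fst (snd z) $ i) differentiable (at w)" for w i
    by (intro bounded_linear_imp_differentiable bounded_linear_compose[OF bounded_linear_vec_nth]
        bounded_linear_compose[OF bounded_linear_fst] bounded_linear_snd)
  have \<xi>: "(\<lambda>z::(real^3) \<times> (real^3) \<times> real. snd (snd z)) differentiable (at w)" for w
    by (intro bounded_linear_imp_differentiable bounded_linear_compose[OF bounded_linear_snd]
        bounded_linear_snd)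
  show ?thesis
    using assms unfolding H_hat_def s_hat_def v_hat_def ux_hat_def uy_hat_def
    by (intro derivative_intros hatf_differentiable[OF _ \<xi> x] assms(1-4) p \<xi> x) auto
qed

lemma H_hat_partial_xi:
  assumes "\<And>p. (\<lambda>p. Ax (fst p) (snd p)) differentiable (at p)"
    "\<And>p. (\<lambda>p. Ay (fst p) (snd p)) differentiable (at p)"
    and s: "s_hat m c q A0 Az x p \<xi> \<noteq> 0" and m: "m \<noteq> 0" and c: "c \<noteq> 0"
    and A0: "((\<lambda>t. A0 t x) has_real_derivative 0) (at ((\<xi> + x $ 3) / c))"
    and Az: "((\<lambda>t. Az t x) has_real_derivative 0) (at ((\<xi> + x $ 3) / c))"
  shows "((\<lambda>\<eta>. H_hat m c q A0 Ax Ay Az x p \<eta>) has_real_derivative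
           m * c\<^sup>2 * (deriv (\<lambda>\<eta>. v_hat m c q Ax Ay x p \<eta>) \<xi> / (2 * s_hat m c q A0 Az x p \<xi>))) (at \<xi>)"
proof -
  define S where "S = (\<lambda>\<eta>. s_hat m c q A0 Az x p \<eta>)"
  define V where "V = (\<lambda>\<eta>. v_hat m c q Ax Ay x p \<eta>)"
  have "V differentiable (at \<xi>)"
    using assms unfolding V_def v_hat_def ux_hat_def uy_hat_def
    by (intro derivative_intros hatf_differentiable assms(1,2)) auto
  then have dV: "(V has_real_derivative deriv V \<xi>) (at \<xi>)"
    using DERIV_deriv_iff_real_differentiable by blast
  have dS: "(S has_real_derivative 0) (at \<xi>)"
    unfolding S_def s_hat_def using m c
    by (auto intro!: derivative_eq_intros hatf_time_independent[of A0 x \<xi> c, OF A0 c]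
        hatf_time_independent[of Az x \<xi> c, OF Az c])
  have "((\<lambda>\<eta>. m * c\<^sup>2 * (1 + (S \<eta>)\<^sup>2 + V \<eta>) / (2 * S \<eta>) + q * hatf c A0 \<eta> x)
          has_real_derivative m * c\<^sup>2 * (deriv V \<xi> / (2 * S \<xi>))) (at \<xi>)"
    using s m c unfolding S_def[symmetric]
    by (auto intro!: derivative_eq_intros dS dV hatf_time_independent[of A0 x \<xi> c, OF A0 c]
        simp: field_simps power2_eq_square)
  then show ?thesis
    unfolding S_def V_def H_hat_def .
qed

lemma v_hat_partial_xi_zero:
  assumes "((\<lambda>t. Ax t x) has_real_derivative 0) (at ((\<xi> + x $ 3) / c))"
    and "((\<lambda>t. Ay t x) has_real_derivative 0) (at ((\<xi> + x $ 3) / c))"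
    and "c \<noteq> 0" and "m \<noteq> 0"
  shows "deriv (\<lambda>\<eta>. v_hat m c q Ax Ay x p \<eta>) \<xi> = 0"
proof -
  have "((\<lambda>\<eta>. v_hat m c q Ax Ay x p \<eta>) has_real_derivative 0) (at \<xi>)"
    unfolding v_hat_def ux_hat_def uy_hat_def using assms(3,4)
    by (auto intro!: derivative_eq_intros hatf_time_independent[of Ax x \<xi> c, OF assms(1,3)]
        hatf_time_independent[of Ay x \<xi> c, OF assms(2,3)])
  then show ?thesis
    by (rule DERIV_imp_deriv)
qed

lemma H_hat_derivative_along_solution:
  assumes "m \<noteq> 0" and c: "c \<noteq> 0"
    and diff: "\<And>p. (\<lambda>p. A0 (fst p) (snd p)) differentiable (at p)"
      "\<And>p. (\<lambda>p. Ax (fst p) (snd p)) differentiable (at p)"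
      "\<And>p. (\<lambda>p. Ay (fst p) (snd p)) differentiable (at p)"
      "\<And>p. (\<lambda>p. Az (fst p) (snd p)) differentiable (at p)"
    and sol: "hamilton_solution (H_hat m c q A0 Ax Ay Az) I X P" and "\<xi> \<in> I"
    and s: "s_hat m c q A0 Az (X \<xi>) (P \<xi>) \<xi> \<noteq> 0"
    and A0: "((\<lambda>t. A0 t (X \<xi>)) has_real_derivative 0) (at ((\<xi> + X \<xi> $ 3) / c))"
    and Az: "((\<lambda>t. Az t (X \<xi>)) has_real_derivative 0) (at ((\<xi> + X \<xi> $ 3) / c))"
  shows "((\<lambda>\<xi>. H_hat m c q A0 Ax Ay Az (X \<xi>) (P \<xi>) \<xi>) has_real_derivative
           m * c\<^sup>2 * (deriv (\<lambda>\<eta>. v_hat m c q Ax Ay (X \<xi>) (P \<xi>) \<eta>) \<xi>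
                        / (2 * s_hat m c q A0 Az (X \<xi>) (P \<xi>) \<xi>))) (at \<xi> within I)"
proof -
  obtain gP gX where
    "GDERIV (\<lambda>p. H_hat m c q A0 Ax Ay Az (X \<xi>) p \<xi>) (P \<xi>) :> gP"
    "GDERIV (\<lambda>x. H_hat m c q A0 Ax Ay Az x (P \<xi>) \<xi>) (X \<xi>) :> gX"
    "(X has_vector_derivative gP) (at \<xi> within I)"
    "(P has_vector_derivative (- gX)) (at \<xi> within I)"
    using sol \<open>\<xi> \<in> I\<close> unfolding hamilton_solution_def by blast
  then show ?thesis
    using hamiltonian_total_derivative H_hat_differentiable[OF diff s \<open>m \<noteq> 0\<close> c]
      H_hat_partial_xi[OF diff(2,3) s \<open>m \<noteq> 0\<close> c A0 Az]
    by blast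
qed

lemma has_integral_from_scaled_derivative:
  fixes h f :: "real \<Rightarrow> real"
  assumes "is_interval I" "a \<in> I" "b \<in> I" "a \<le> b" "k \<noteq> 0"
    and "\<And>\<xi>. \<xi> \<in> I \<Longrightarrow> (h has_real_derivative k * f \<xi>) (at \<xi> within I)"
  shows "(f has_integral (h b - h a) / k) {a..b}"
proof -
  have ab: "{a..b} \<subseteq> I"
    using mem_is_interval_1_I[OF assms(1-3)] by auto
  have "((\<lambda>\<xi>. h \<xi> / k) has_vector_derivative f \<xi>) (at \<xi> within {a..b})" if "\<xi> \<in> {a..b}" for \<xi>
    using DERIV_cdivide[OF DERIV_subset[OF assms(6) ab], of \<xi> k] that ab \<open>k \<noteq> 0\<close>
    by (auto simp: has_real_derivative_iff_has_vector_derivative)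
  from fundamental_theorem_of_calculus[OF \<open>a \<le> b\<close> this] show ?thesis
    by (simp add: diff_divide_distrib)
qed

theorem corollary1:
  fixes m c q :: real
    and A0 Ax Ay Az :: field
    and I :: "real set"
    and X P :: "real \<Rightarrow> real^3"
  assumes m_pos: "m > 0" and c_pos: "c > 0"
    and diff: "\<And>p. (\<lambda>p. A0 (fst p) (snd p)) differentiable (at p)"
              "\<And>p. (\<lambda>p. Ax (fst p) (snd p)) differentiable (at p)"
              "\<And>p. (\<lambda>p. Ay (fst p) (snd p)) differentiable (at p)"
              "\<And>p. (\<lambda>p. Az (fst p) (snd p)) differentiable (at p)"
    and I_int: "is_interval I"
    and s_pos: "\<forall>\<xi>\<in>I. s_hat m c q A0 Az (X \<xi>) (P \<xi>) \<xi> > 0"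
    and sol: "hamilton_solution (H_hat m c q A0 Ax Ay Az) I X P"
  shows
    "(\<forall>U. open U \<and> time_indep_on U A0 \<and> time_indep_on U Ax \<and> time_indep_on U Ay
           \<and> time_indep_on U Az \<and> (\<forall>\<xi>\<in>I. ((\<xi> + X \<xi> $ 3) / c, X \<xi>) \<in> U)
        \<longrightarrow> (\<forall>\<xi>0\<in>I. \<forall>\<xi>1\<in>I.
               H_hat m c q A0 Ax Ay Az (X \<xi>1) (P \<xi>1) \<xi>1
             = H_hat m c q A0 Ax Ay Az (X \<xi>0) (P \<xi>0) \<xi>0))
     \<and>
     (\<forall>U. open U \<and> time_indep_on U A0 \<and> time_indep_on U Az
           \<and> (\<forall>\<xi>\<in>I. ((\<xi> + X \<xi> $ 3) / c, X \<xi>) \<in> U)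
        \<longrightarrow> (\<forall>\<xi>0\<in>I. \<forall>\<xi>1\<in>I. \<xi>0 \<le> \<xi>1 \<longrightarrow>
               ((\<lambda>\<xi>. deriv (\<lambda>\<eta>. v_hat m c q Ax Ay (X \<xi>) (P \<xi>) \<eta>) \<xi>
                        / (2 * s_hat m c q A0 Az (X \<xi>) (P \<xi>) \<xi>))
                has_integral
                  ((H_hat m c q A0 Ax Ay Az (X \<xi>1) (P \<xi>1) \<xi>1
                    - H_hat m c q A0 Ax Ay Az (X \<xi>0) (P \<xi>0) \<xi>0) / (m * c\<^sup>2)))
               {\<xi>0..\<xi>1}))"
proof -
  define h where "h \<xi> = H_hat m c q A0 Ax Ay Az (X \<xi>) (P \<xi>) \<xi>" for \<xi>
  define f where "f \<xi> = deriv (\<lambda>\<eta>. v_hat m c q Ax Ay (X \<xi>) (P \<xi>) \<eta>) \<xi>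
                        / (2 * s_hat m c q A0 Az (X \<xi>) (P \<xi>) \<xi>)" for \<xi>
  have dh: "(h has_real_derivative m * c\<^sup>2 * f \<xi>) (at \<xi> within I)"
    if "time_indep_on U A0" "time_indep_on U Az" "\<forall>\<xi>\<in>I. ((\<xi> + X \<xi> $ 3) / c, X \<xi>) \<in> U" "\<xi> \<in> I"
    for U \<xi>
    using H_hat_derivative_along_solution[of m c, OF _ _ diff sol \<open>\<xi> \<in> I\<close>] that m_pos c_pos s_pos
    unfolding h_def f_def time_indep_on_def by force
  have "h \<xi>1 = h \<xi>0"
    if U: "time_indep_on U A0" "time_indep_on U Ax" "time_indep_on U Ay" "time_indep_on U Az"
      "\<forall>\<xi>\<in>I. ((\<xi> + X \<xi> $ 3) / c, X \<xi>) \<in> U" and "\<xi>0 \<in> I" "\<xi>1 \<in> I" for U \<xi>0 \<xi>1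
  proof -
    have "f \<xi> = 0" if "\<xi> \<in> I" for \<xi>
      using v_hat_partial_xi_zero[of Ax "X \<xi>" \<xi> c Ay m] U(2,3,5) that c_pos m_pos
      unfolding f_def time_indep_on_def by force
    with dh[OF U(1,4,5)] obtain k where "\<forall>\<xi>\<in>I. h \<xi> = k"
      using has_field_derivative_zero_constant[OF is_interval_convex[OF I_int]] by force
    with \<open>\<xi>0 \<in> I\<close> \<open>\<xi>1 \<in> I\<close> show ?thesis by simp
  qed
  moreover have "(f has_integral (h \<xi>1 - h \<xi>0) / (m * c\<^sup>2)) {\<xi>0..\<xi>1}"
    if "time_indep_on U A0" "time_indep_on U Az" "\<forall>\<xi>\<in>I. ((\<xi> + X \<xi> $ 3) / c, X \<xi>) \<in> U"
      and "\<xi>0 \<in> I" "\<xi>1 \<in> I" "\<xi>0 \<le> \<xi>1" for U \<xi>0 \<xi>1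
    using has_integral_from_scaled_derivative[OF I_int \<open>\<xi>0 \<in> I\<close> \<open>\<xi>1 \<in> I\<close> \<open>\<xi>0 \<le> \<xi>1\<close>]
      dh[OF that(1-3)] m_pos c_pos by simp
  ultimately show ?thesis
    unfolding h_def[symmetric] f_def[abs_def, symmetric] by blast
qed

end
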